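(* Let $\mathbb P$ be the law of a stationary simple point process on $\mathbb R^d$ with finite positive intensity $m$. For every $\gamma>0$, $L\in\mathbb N$ and $z\in\mathbb R^d$, $$\mathbb E_0\big[\xi(\Lambda_L(z))^\gamma\big]\le\frac1m(2L+2)^{d\gamma}\rho_{1+\gamma}.$$
   Context: $\mathcal N$ = locally finite subsets of $\mathbb R^d$, identified with counting measures ($\xi(A)=\#(\xi\cap A)$); $\tau_x\xi=\xi-x$; stationarity: $\mathbb P(\tau_xA)=\mathbb P(A)$. Intensity $m=\mathbb E[\xi([0,1]^d)]$. $\Lambda_L(z)=z+[-L,L]^d$. $\rho_\gamma:=\mathbb E[\xi([0,1]^d)^\gamma]$ (possibly $+\infty$). The Palm distribution is $\mathbb P_0(A)=\frac1m\int d\mathbb P(\xi)\sum_{x\in\xi\cap[0,1]^d}\mathbf 1_A(\tau_x\xi)$, with expectation $\mathbb E_0$. $\mathbb N=\{0,1,2,\dots\}$. *)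

theory Defs
  imports "HOL-Probability.Probability"
begin

text \<open>Locally finite subsets of R^d (d = DIM('a)), identified with simple counting measures.\<close>
definition loc_finite :: "'a::euclidean_space set \<Rightarrow> bool" where
  "loc_finite X \<longleftrightarrow> (\<forall>K. compact K \<longrightarrow> finite (X \<inter> K))"

definition npts :: "'a set \<Rightarrow> 'a set \<Rightarrow> nat" where
  "npts \<xi> A = card (\<xi> \<inter> A)"

definition config_space :: "'a::euclidean_space set measure" where
  "config_space = sigma {X. loc_finite X}
     {{X. loc_finite X \<and> npts X A = k} | A k. A \<in> sets borel \<and> bounded A}"

definition point_process :: "'a::euclidean_space set measure \<Rightarrow> bool" where
  "point_process P \<longleftrightarrow> prob_space P \<and> sets P = sets config_space"

definition shift :: "'a::euclidean_space \<Rightarrow> 'a set \<Rightarrow> 'a set" where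
  "shift x \<xi> = (\<lambda>y. y - x) ` \<xi>"

definition stationary :: "'a::euclidean_space set measure \<Rightarrow> bool" where
  "stationary P \<longleftrightarrow> (\<forall>x. \<forall>A \<in> sets P. emeasure P (shift x ` A) = emeasure P A)"

definition unit_cube :: "'a::euclidean_space set" where
  "unit_cube = cbox 0 One"

definition Lambda :: "real \<Rightarrow> 'a::euclidean_space \<Rightarrow> 'a set" where
  "Lambda L z = cbox (z - L *\<^sub>R One) (z + L *\<^sub>R One)"

definition intensity :: "'a::euclidean_space set measure \<Rightarrow> ennreal" where
  "intensity P = (\<integral>\<^sup>+ \<xi>. of_nat (npts \<xi> unit_cube) \<partial>P)"

definition rho :: "'a::euclidean_space set measure \<Rightarrow> real \<Rightarrow> ennreal" where
  "rho P \<gamma> = (\<integral>\<^sup>+ \<xi>. ennreal (real (npts \<xi> unit_cube) powr \<gamma>) \<partial>P)"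

definition palm_expectation ::
  "'a::euclidean_space set measure \<Rightarrow> ('a set \<Rightarrow> ennreal) \<Rightarrow> ennreal" where
  "palm_expectation P f =
     (\<integral>\<^sup>+ \<xi>. (\<Sum>x \<in> \<xi> \<inter> unit_cube. f (shift x \<xi>)) \<partial>P) / intensity P"

end

theory Submission
  imports Defs
begin

text \<open>
  For a point x of \<xi> in the unit cube, the box x + \<Lambda>_L(z) lies in z + [-L, L+1]^d, which is
  covered by N = (2L+2)^d lattice translates C_k of the unit cube. Hence the sum defining the
  Palm expectation is at most \<xi>([0,1]^d) (\<Sum>_k \<xi>(C_k))^\<gamma>. Young's inequality with exponents
  1+\<gamma> and (1+\<gamma>)/\<gamma>, combined with the power-mean bound (\<Sum>_k t_k)^(1+\<gamma>) \<le> N^\<gamma> \<Sum>_k t_k^(1+\<gamma>),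
  bounds its expectation by N^\<gamma> times the (1+\<gamma>)-th moments of the counts, and by
  stationarity each of these moments is \<rho>_(1+\<gamma>).
\<close>

text \<open>Young's inequality applied to c^(g/(1+g)) u and v^g / c^(g/(1+g)).\<close>

lemma Youngs_inequality_scaled:
  fixes u v c g :: real
  assumes "u \<ge> 0" "v \<ge> 0" "c > 0" "g > 0"
  shows "u * v powr g \<le> c powr g * u powr (1+g) / (1+g) + (g/(1+g)) * v powr (1+g) / c"
proof -
  define p where "p = 1 + g"
  define q where "q = p / g"
  have p1: "p > 1" "q > 1" using assms by (auto simp: p_def q_def)
  have pq: "1/p + 1/q = 1" using assms by (simp add: p_def q_def field_simps)
  define a where "a = c powr (g/p) * u"
  define b where "b = v powr g / c powr (g/p)"
  have ab: "a \<ge> 0" "b \<ge> 0" using assms by (auto simp: a_def b_def)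
  have "a * b = u * v powr g"
    using assms by (simp add: a_def b_def field_simps)
  moreover have "a powr p = c powr g * u powr p"
    using assms p1 by (simp add: a_def powr_mult powr_powr)
  moreover have "b powr q = v powr p / c"
  proof -
    have "g * q = p" "g / p * q = 1" using assms by (auto simp: q_def p_def)
    then show ?thesis using assms p1 by (simp add: b_def powr_divide powr_powr)
  qed
  moreover have "g / p = 1 / q" using assms by (simp add: p_def q_def)
  ultimately show ?thesis
    using Youngs_inequality[OF p1 pq ab] by (simp add: p_def[symmetric] field_simps)
qed

lemma powr_sum_le_card_powr_sum:
  fixes t :: "'k \<Rightarrow> real"
  assumes "finite K" "K \<noteq> {}" "\<And>k. k \<in> K \<Longrightarrow> t k \<ge> 0" "g > 0"
  shows "(sum t K) powr (1+g) \<le> real (card K) powr g * (\<Sum>k\<in>K. t k powr (1+g))"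
proof -
  define T where "T = sum t K"
  define N where "N = real (card K)"
  define S where "S = (\<Sum>k\<in>K. t k powr (1+g))"
  have N: "N > 0" using assms by (simp add: N_def card_gt_0_iff)
  have T: "T \<ge> 0" using assms by (simp add: T_def sum_nonneg)
  have "T powr (1+g) = (\<Sum>k\<in>K. t k * T powr g)"
    using T by (simp add: powr_add T_def sum_distrib_right)
  also have "\<dots> \<le> (\<Sum>k\<in>K. N powr g * t k powr (1+g) / (1+g) + (g/(1+g)) * T powr (1+g) / N)"
    by (rule sum_mono, rule Youngs_inequality_scaled) (use assms T N in auto)
  also have "\<dots> = N powr g * S / (1+g) + (g/(1+g)) * T powr (1+g)"
    using N by (simp add: sum.distrib sum_divide_distrib[symmetric] sum_distrib_left[symmetric] N_def S_def)
  finally have "(1+g) * T powr (1+g) \<le> (1+g) * (N powr g * S / (1+g) + (g/(1+g)) * T powr (1+g))"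
    using assms by (intro mult_left_mono) auto
  also have "\<dots> = N powr g * S + g * T powr (1+g)"
    using assms by (simp add: distrib_left)
  finally show ?thesis by (simp add: T_def N_def S_def algebra_simps)
qed

lemma mult_sum_powr_le:
  fixes t :: "'k \<Rightarrow> real"
  assumes "finite K" "K \<noteq> {}" "\<And>k. k \<in> K \<Longrightarrow> t k \<ge> 0" "g > 0" "a \<ge> 0"
  shows "a * (sum t K) powr g \<le> real (card K) powr g * a powr (1+g) / (1+g)
     + (g/(1+g)) * real (card K) powr g * (\<Sum>k\<in>K. t k powr (1+g)) / real (card K)"
proof -
  have N: "real (card K) > 0" using assms by (simp add: card_gt_0_iff)
  have "a * (sum t K) powr g \<le> real (card K) powr g * a powr (1+g) / (1+g)
      + (g/(1+g)) * (sum t K) powr (1+g) / real (card K)"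
    using assms N by (intro Youngs_inequality_scaled) (auto simp: sum_nonneg)
  also have "\<dots> \<le> real (card K) powr g * a powr (1+g) / (1+g)
      + (g/(1+g)) * (real (card K) powr g * (\<Sum>k\<in>K. t k powr (1+g))) / real (card K)"
    using powr_sum_le_card_powr_sum[OF assms(1-4)] N assms
    by (intro add_left_mono divide_right_mono mult_left_mono) auto
  finally show ?thesis by simp
qed

lemma nn_integral_mult_sum_powr_le:
  fixes f :: "'b \<Rightarrow> real" and g :: "'k \<Rightarrow> 'b \<Rightarrow> real"
  assumes K: "finite K" "K \<noteq> {}" and \<gamma>: "\<gamma> > 0"
    and f: "f \<in> borel_measurable M" "\<And>x. x \<in> space M \<Longrightarrow> 0 \<le> f x"
    and g: "\<And>k. k \<in> K \<Longrightarrow> g k \<in> borel_measurable M"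
      "\<And>k x. k \<in> K \<Longrightarrow> x \<in> space M \<Longrightarrow> 0 \<le> g k x"
    and f_R: "(\<integral>\<^sup>+x. ennreal (f x powr (1+\<gamma>)) \<partial>M) \<le> R"
    and g_R: "\<And>k. k \<in> K \<Longrightarrow> (\<integral>\<^sup>+x. ennreal (g k x powr (1+\<gamma>)) \<partial>M) \<le> R"
  shows "(\<integral>\<^sup>+x. ennreal (f x * (\<Sum>k\<in>K. g k x) powr \<gamma>) \<partial>M) \<le> ennreal (real (card K) powr \<gamma>) * R"
proof -
  define N where "N = real (card K)"
  define c1 where "c1 = N powr \<gamma> / (1+\<gamma>)"
  define c2 where "c2 = \<gamma> / (1+\<gamma>) * N powr \<gamma> / N"
  have N: "N > 0" using K by (simp add: N_def card_gt_0_iff)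
  have c: "c1 \<ge> 0" "c2 \<ge> 0" using N \<gamma> by (auto simp: c1_def c2_def)
  have "ennreal (f x * (\<Sum>k\<in>K. g k x) powr \<gamma>)
     \<le> ennreal c1 * ennreal (f x powr (1+\<gamma>)) + ennreal c2 * (\<Sum>k\<in>K. ennreal (g k x powr (1+\<gamma>)))"
    if "x \<in> space M" for x
  proof -
    have "f x * (\<Sum>k\<in>K. g k x) powr \<gamma> \<le> c1 * f x powr (1+\<gamma>) + c2 * (\<Sum>k\<in>K. g k x powr (1+\<gamma>))"
      using mult_sum_powr_le[OF K _ \<gamma>, of "\<lambda>k. g k x" "f x"] f(2) g(2) that
      by (simp add: c1_def c2_def N_def field_simps)
    then have "ennreal (f x * (\<Sum>k\<in>K. g k x) powr \<gamma>)
        \<le> ennreal (c1 * f x powr (1+\<gamma>)) + ennreal (c2 * (\<Sum>k\<in>K. g k x powr (1+\<gamma>)))"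
      using c by (simp add: ennreal_leI sum_nonneg flip: ennreal_plus)
    then show ?thesis
      using c by (simp add: ennreal_mult sum_nonneg)
  qed
  then have "(\<integral>\<^sup>+x. ennreal (f x * (\<Sum>k\<in>K. g k x) powr \<gamma>) \<partial>M)
     \<le> (\<integral>\<^sup>+x. ennreal c1 * ennreal (f x powr (1+\<gamma>))
          + ennreal c2 * (\<Sum>k\<in>K. ennreal (g k x powr (1+\<gamma>))) \<partial>M)"
    by (rule nn_integral_mono)
  also have "\<dots> = ennreal c1 * (\<integral>\<^sup>+x. ennreal (f x powr (1+\<gamma>)) \<partial>M)
      + ennreal c2 * (\<Sum>k\<in>K. \<integral>\<^sup>+x. ennreal (g k x powr (1+\<gamma>)) \<partial>M)"
    using f(1) g(1) by (simp add: nn_integral_add nn_integral_cmult nn_integral_sum del: sum_ennreal)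
  also have "\<dots> \<le> ennreal c1 * R + ennreal c2 * (\<Sum>k\<in>K. R)"
    by (intro add_mono mult_left_mono sum_mono f_R g_R) auto
  also have "\<dots> = ennreal (c1 + c2 * N) * R"
    using c N by (simp add: N_def ennreal_mult ennreal_of_nat_eq_real_of_nat distrib_right mult.assoc)
  also have "c1 + c2 * N = N powr \<gamma>"
    using N \<gamma> unfolding c1_def c2_def by (simp add: divide_simps) (simp add: algebra_simps)
  finally show ?thesis by (simp add: N_def)
qed

lemma space_point_process: "point_process P \<Longrightarrow> space P = {X. loc_finite X}"
proof -
  assume "point_process P"
  then have "space P = space config_space"
    unfolding point_process_def by (metis sets_eq_imp_space_eq)
  also have "\<dots> = {X. loc_finite X}"
    unfolding config_space_def by (rule space_measure_of) auto
  finally show ?thesis .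
qed

lemma measurable_npts:
  assumes "point_process P" "A \<in> sets borel" "bounded A"
  shows "(\<lambda>\<xi>. npts \<xi> A) \<in> measurable P (count_space UNIV)"
proof (subst measurable_count_space_eq2_countable, safe)
  fix j :: nat
  have "(\<lambda>\<xi>. npts \<xi> A) -` {j} \<inter> space P = {X. loc_finite X \<and> npts X A = j}"
    using space_point_process[OF assms(1)] by auto
  also have "\<dots> \<in> sets config_space"
    unfolding config_space_def using assms(2,3)
    by (subst sets_measure_of) auto
  finally show "(\<lambda>\<xi>. npts \<xi> A) -` {j} \<inter> space P \<in> sets P"
    using assms(1) unfolding point_process_def by simp
qed simp

lemma borel_measurable_real_npts:
  "point_process P \<Longrightarrow> A \<in> sets borel \<Longrightarrow> bounded A \<Longrightarrow> (\<lambda>\<xi>. real (npts \<xi> A)) \<in> borel_measurable P"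
  by (rule measurable_compose[OF measurable_npts]) simp_all

lemma shift_Int: "shift c \<xi> \<inter> A = (\<lambda>y. y - c) ` (\<xi> \<inter> (+) c ` A)"
  unfolding shift_def by (auto simp: image_iff) (metis add.commute diff_add_cancel)+

lemma npts_shift: "npts (shift c \<xi>) A = npts \<xi> ((+) c ` A)"
  unfolding npts_def shift_Int by (rule card_image) (auto simp: inj_on_def)

lemma loc_finite_shift: "loc_finite \<xi> \<Longrightarrow> loc_finite (shift c \<xi>)"
  unfolding loc_finite_def shift_Int by (auto intro!: compact_translation)

lemma shift_minus_shift: "shift (-c) (shift c \<xi>) = \<xi>"
  unfolding shift_def by (simp add: image_image)

lemma sets_borel_translation:
  fixes A :: "'a::euclidean_space set"
  assumes "A \<in> sets borel"
  shows "(+) c ` A \<in> sets borel"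
proof -
  have "(+) c ` A = (\<lambda>x. x - c) -` A \<inter> space borel"
    by (auto simp: image_iff) (metis add.commute diff_add_cancel)
  also have "\<dots> \<in> sets borel"
    by (rule measurable_sets[OF _ assms]) (intro borel_measurable_continuous_onI continuous_intros)
  finally show ?thesis .
qed

lemma npts_translation_level_set:
  assumes "point_process P"
  shows "(\<lambda>\<xi>. npts \<xi> ((+) c ` A)) -` {j} \<inter> space P = shift (-c) ` ((\<lambda>\<xi>. npts \<xi> A) -` {j} \<inter> space P)"
proof (intro equalityI subsetI)
  fix \<xi> assume "\<xi> \<in> (\<lambda>\<xi>. npts \<xi> ((+) c ` A)) -` {j} \<inter> space P"
  then have "shift c \<xi> \<in> (\<lambda>\<xi>. npts \<xi> A) -` {j} \<inter> space P"
    using space_point_process[OF assms] by (auto simp: npts_shift intro: loc_finite_shift)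
  then show "\<xi> \<in> shift (-c) ` ((\<lambda>\<xi>. npts \<xi> A) -` {j} \<inter> space P)"
    by (rule image_eqI[rotated]) (simp add: shift_minus_shift)
next
  fix \<xi> assume "\<xi> \<in> shift (-c) ` ((\<lambda>\<xi>. npts \<xi> A) -` {j} \<inter> space P)"
  moreover have "(+) (-c) ` (+) c ` A = A" by (simp add: image_image)
  ultimately show "\<xi> \<in> (\<lambda>\<xi>. npts \<xi> ((+) c ` A)) -` {j} \<inter> space P"
    using space_point_process[OF assms] by (auto simp: npts_shift intro: loc_finite_shift)
qed

lemma distr_npts_translation:
  fixes A :: "'a::euclidean_space set"
  assumes P: "point_process P" and "stationary P" and A: "A \<in> sets borel" "bounded A"
  shows "distr P (count_space UNIV) (\<lambda>\<xi>. npts \<xi> ((+) c ` A)) = distr P (count_space UNIV) (\<lambda>\<xi>. npts \<xi> A)"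
proof (rule measure_eqI_countable[where A=UNIV])
  fix j :: nat
  have cA: "(+) c ` A \<in> sets borel" "bounded ((+) c ` A)"
    using A by (auto intro: sets_borel_translation bounded_translation)
  have "(\<lambda>\<xi>. npts \<xi> A) -` {j} \<inter> space P \<in> sets P"
    using measurable_npts[OF P A] by (rule measurable_sets) simp
  then show "emeasure (distr P (count_space UNIV) (\<lambda>\<xi>. npts \<xi> ((+) c ` A))) {j} =
      emeasure (distr P (count_space UNIV) (\<lambda>\<xi>. npts \<xi> A)) {j}"
    using \<open>stationary P\<close> measurable_npts[OF P A] measurable_npts[OF P cA]
    by (simp add: stationary_def emeasure_distr npts_translation_level_set[OF P])
qed auto

lemma nn_integral_npts_translation:
  fixes A :: "'a::euclidean_space set"
  assumes P: "point_process P" and "stationary P" and A: "A \<in> sets borel" "bounded A"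
  shows "(\<integral>\<^sup>+\<xi>. h (npts \<xi> ((+) c ` A)) \<partial>P) = (\<integral>\<^sup>+\<xi>. h (npts \<xi> A) \<partial>P)"
proof -
  have "(+) c ` A \<in> sets borel" "bounded ((+) c ` A)"
    using A by (auto intro: sets_borel_translation bounded_translation)
  then have "(\<integral>\<^sup>+\<xi>. h (npts \<xi> ((+) c ` A)) \<partial>P)
      = (\<integral>\<^sup>+j. h j \<partial>distr P (count_space UNIV) (\<lambda>\<xi>. npts \<xi> ((+) c ` A)))"
    by (simp add: nn_integral_distr measurable_npts[OF P])
  also have "\<dots> = (\<integral>\<^sup>+\<xi>. h (npts \<xi> A) \<partial>P)"
    unfolding distr_npts_translation[OF assms] by (simp add: nn_integral_distr measurable_npts[OF P A])
  finally show ?thesis .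
qed

text \<open>One index per axis more than needed to cover [-L, L+1]; this gives the constant (2L+2)^d.\<close>

definition cube_indices :: "nat \<Rightarrow> ('a::euclidean_space \<Rightarrow> int) set" where
  "cube_indices L = PiE Basis (\<lambda>_. {-int L .. int L + 1})"

definition cube_at :: "'a::euclidean_space \<Rightarrow> ('a \<Rightarrow> int) \<Rightarrow> 'a set" where
  "cube_at z k = (+) (z + (\<Sum>b\<in>Basis. of_int (k b) *\<^sub>R b)) ` unit_cube"

lemma finite_cube_indices: "finite (cube_indices L)"
  by (auto simp: cube_indices_def intro!: finite_PiE)

lemma cube_indices_nonempty: "cube_indices L \<noteq> {}"
  by (auto simp: cube_indices_def PiE_eq_empty_iff)

lemma card_cube_indices: "card (cube_indices L :: ('a::euclidean_space \<Rightarrow> int) set) = (2 * L + 2) ^ DIM('a)"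
  by (simp add: cube_indices_def card_PiE nat_add_distrib nat_mult_distrib)

lemma compact_cube_at: "compact (cube_at z k)"
  unfolding cube_at_def unit_cube_def by (intro compact_translation) auto

lemma sets_borel_cube_at: "cube_at z k \<in> sets borel"
  by (simp add: compact_cube_at borel_compact)

lemma bounded_cube_at: "bounded (cube_at z k)"
  by (simp add: compact_cube_at compact_imp_bounded)

lemma cbox_subset_UN_cube_at:
  fixes z :: "'a::euclidean_space"
  shows "cbox (z - real L *\<^sub>R One) (z + (real L + 1) *\<^sub>R One) \<subseteq> (\<Union>k\<in>cube_indices L. cube_at z k)"
proof
  fix y assume y: "y \<in> cbox (z - real L *\<^sub>R One) (z + (real L + 1) *\<^sub>R One)"
  define k where "k = restrict (\<lambda>b. \<lfloor>(y - z) \<bullet> b\<rfloor>) Basis"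
  have yb: "- real L \<le> (y - z) \<bullet> b \<and> (y - z) \<bullet> b \<le> real L + 1" if "b \<in> Basis" for b
    using y that by (auto simp: mem_box algebra_simps)
  have "- int L \<le> \<lfloor>(y - z) \<bullet> b\<rfloor> \<and> \<lfloor>(y - z) \<bullet> b\<rfloor> \<le> int L + 1" if "b \<in> Basis" for b
    using yb[OF that] by (simp add: le_floor_iff floor_le_iff)
  then have "k \<in> cube_indices L"
    by (auto simp: k_def cube_indices_def)
  moreover have "y - (z + (\<Sum>b\<in>Basis. of_int (k b) *\<^sub>R b)) \<in> unit_cube"
  proof -
    have "(y - (z + (\<Sum>b\<in>Basis. of_int (k b) *\<^sub>R b))) \<bullet> i = (y - z) \<bullet> i - of_int \<lfloor>(y - z) \<bullet> i\<rfloor>"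
      if "i \<in> Basis" for i
      using that by (simp add: k_def inner_diff_left inner_add_left inner_sum_left inner_Basis
          if_distrib cong: if_cong)
    moreover have "0 \<le> r - of_int \<lfloor>r\<rfloor> \<and> r - of_int \<lfloor>r\<rfloor> \<le> 1" for r :: real
      using of_int_floor_le[of r] real_of_int_floor_gt_diff_one[of r] by linarith
    ultimately show ?thesis
      unfolding unit_cube_def mem_box by simp
  qed
  then have "y \<in> cube_at z k"
    unfolding cube_at_def by (rule image_eqI[rotated]) simp
  ultimately show "y \<in> (\<Union>k\<in>cube_indices L. cube_at z k)" by blast
qed

lemma translation_Lambda_subset_cbox:
  fixes x z :: "'a::euclidean_space"
  assumes "x \<in> unit_cube"
  shows "(+) x ` Lambda L z \<subseteq> cbox (z - L *\<^sub>R One) (z + (L + 1) *\<^sub>R One)"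
proof -
  have "(+) x ` Lambda L z = cbox (x + (z - L *\<^sub>R One)) (x + (z + L *\<^sub>R One))"
    unfolding Lambda_def by (simp add: cbox_translation)
  also have "\<dots> \<subseteq> cbox (z - L *\<^sub>R One) (z + (L + 1) *\<^sub>R One)"
    using assms unfolding unit_cube_def
    by (subst subset_box(1)) (auto simp: mem_box algebra_simps)
  finally show ?thesis .
qed

lemma npts_le_sum_cover:
  assumes "finite K" "\<And>k. k \<in> K \<Longrightarrow> finite (\<xi> \<inter> C k)" "A \<subseteq> (\<Union>k\<in>K. C k)"
  shows "npts \<xi> A \<le> (\<Sum>k\<in>K. npts \<xi> (C k))"
proof -
  have "npts \<xi> A \<le> card (\<Union>k\<in>K. \<xi> \<inter> C k)"
    unfolding npts_def using assms by (intro card_mono finite_UN_I) auto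
  also have "\<dots> \<le> (\<Sum>k\<in>K. npts \<xi> (C k))"
    unfolding npts_def by (rule card_UN_le[OF assms(1)])
  finally show ?thesis .
qed

lemma sum_npts_shift_Lambda_le:
  fixes \<xi> :: "'a::euclidean_space set"
  assumes "loc_finite \<xi>" "\<gamma> \<ge> 0"
  shows "(\<Sum>x\<in>\<xi> \<inter> unit_cube. real (npts (shift x \<xi>) (Lambda (real L) z)) powr \<gamma>)
    \<le> real (npts \<xi> unit_cube) * (\<Sum>k\<in>cube_indices L. real (npts \<xi> (cube_at z k))) powr \<gamma>"
proof -
  define T where "T = (\<Sum>k\<in>cube_indices L. real (npts \<xi> (cube_at z k)))"
  have "real (npts (shift x \<xi>) (Lambda (real L) z)) powr \<gamma> \<le> T powr \<gamma>" if "x \<in> \<xi> \<inter> unit_cube" for x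
  proof -
    have "npts (shift x \<xi>) (Lambda (real L) z) \<le> (\<Sum>k\<in>cube_indices L. npts \<xi> (cube_at z k))"
      unfolding npts_shift using assms(1) that compact_cube_at
        translation_Lambda_subset_cbox[of x "real L" z] cbox_subset_UN_cube_at[of z L]
      by (intro npts_le_sum_cover finite_cube_indices) (auto simp: loc_finite_def)
    then show ?thesis
      using assms(2) by (intro powr_mono2) (auto simp: T_def simp flip: of_nat_sum)
  qed
  then have "(\<Sum>x\<in>\<xi> \<inter> unit_cube. real (npts (shift x \<xi>) (Lambda (real L) z)) powr \<gamma>)
      \<le> (\<Sum>x\<in>\<xi> \<inter> unit_cube. T powr \<gamma>)"
    by (rule sum_mono)
  then show ?thesis by (simp add: npts_def T_def)
qed

lemma nn_integral_npts_cube_at_powr: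
  assumes "point_process P" "stationary P"
  shows "(\<integral>\<^sup>+\<xi>. ennreal (real (npts \<xi> (cube_at z k)) powr p) \<partial>P) = rho P p"
  unfolding rho_def cube_at_def unit_cube_def
  using nn_integral_npts_translation[OF assms, of "cbox 0 One"] by simp

theorem lemma8p2:
  fixes P :: "'a::euclidean_space set measure"
    and \<gamma> :: real and L :: nat and z :: 'a
  assumes "point_process P"
    and "stationary P"
    and "0 < intensity P" and "intensity P < \<infinity>"
    and "\<gamma> > 0"
  shows "palm_expectation P (\<lambda>\<xi>. ennreal (real (npts \<xi> (Lambda (real L) z)) powr \<gamma>))
         \<le> ennreal ((2 * real L + 2) powr (real DIM('a) * \<gamma>)) * rho P (1 + \<gamma>) / intensity P"
proof -
  note P = assms(1,2)
  let ?K = "cube_indices L :: ('a \<Rightarrow> int) set"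
  have "palm_expectation P (\<lambda>\<xi>. ennreal (real (npts \<xi> (Lambda (real L) z)) powr \<gamma>))
      \<le> (\<integral>\<^sup>+\<xi>. ennreal (real (npts \<xi> unit_cube) * (\<Sum>k\<in>?K. real (npts \<xi> (cube_at z k))) powr \<gamma>) \<partial>P)
        / intensity P"
    unfolding palm_expectation_def using space_point_process[OF P(1)] assms(5)
    by (intro divide_right_mono_ennreal nn_integral_mono)
      (simp add: ennreal_leI sum_npts_shift_Lambda_le)
  also have "\<dots> \<le> ennreal (real (card ?K) powr \<gamma>) * rho P (1 + \<gamma>) / intensity P"
    using assms(5) borel_measurable_real_npts[OF P(1)]
    by (intro divide_right_mono_ennreal nn_integral_mult_sum_powr_le finite_cube_indices
        cube_indices_nonempty)
      (auto simp: sets_borel_cube_at bounded_cube_at unit_cube_def rho_def nn_integral_npts_cube_at_powr[OF P])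
  also have "real (card ?K) powr \<gamma> = (2 * real L + 2) powr (real DIM('a) * \<gamma>)"
    by (simp add: card_cube_indices powr_realpow[symmetric] powr_powr add.commute)
  finally show ?thesis .
qed

end
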